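(* Let $n\in\mathbb{N}$, $f:\{0,1\}^n\to\mathbb{R}$ and $\alpha,\beta>0$. Define $g:[0,1]\to\mathbb{R}$ by $g(p)=\mathbb{E}_{X_1,\dots,X_n\sim p}[f(X)]$, where $X_1,\dots,X_n$ are independent $\mathsf{Bernoulli}(p)$. Then $$\mathbb{E}_{P\sim\mathsf{Beta}(\alpha,\beta),\ X_1,\dots,X_n\sim P}\Big[f(X)\sum_{i\in[n]}(X_i-P)\Big]=(\alpha+\beta)\,\mathbb{E}_{P\sim\mathsf{Beta}(\alpha,\beta)}\Big[g(P)\Big(P-\frac{\alpha}{\alpha+\beta}\Big)\Big],$$ where on the left $X_1,\dots,X_n$ are independent $\mathsf{Bernoulli}(P)$ conditioned on $P$.
   Context: $\mathsf{Beta}(\alpha,\beta)$ is the distribution on $[0,1]$ with density $p^{\alpha-1}(1-p)^{\beta-1}/\mathsf{B}(\alpha,\beta)$, where $\mathsf{B}(\alpha,\beta)=\int_0^1p^{\alpha-1}(1-p)^{\beta-1}\,dp$. *)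

theory Defs
  imports "HOL-Probability.Probability"
begin

definition beta_fun :: "real \<Rightarrow> real \<Rightarrow> real" where
  "beta_fun a b = (LBINT p=0..1. p powr (a - 1) * (1 - p) powr (b - 1))"

definition beta_density :: "real \<Rightarrow> real \<Rightarrow> real \<Rightarrow> real" where
  "beta_density a b p = indicator {0..1} p * p powr (a - 1) * (1 - p) powr (b - 1) / beta_fun a b"

definition beta_measure :: "real \<Rightarrow> real \<Rightarrow> real measure" where
  "beta_measure a b = density lborel (\<lambda>p. ennreal (beta_density a b p))"

text \<open>Law of n i.i.d. Bernoulli(p) bits X_0..X_{n-1}, encoded as functions nat => bool
  (True = 1), with value False outside {..<n}.\<close>
definition bern_prod :: "nat \<Rightarrow> real \<Rightarrow> (nat \<Rightarrow> bool) pmf" where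
  "bern_prod n p = Pi_pmf {..<n} False (\<lambda>_. bernoulli_pmf p)"

end

theory Submission
  imports Defs
begin

text \<open>Both sides are linear in \<open>f\<close>, so it suffices to take \<open>f\<close> the indicator of a bit vector
  \<open>x\<close> with \<open>k\<close> ones. Then each side integrates the Beta density times the likelihood
  \<open>p^k (1-p)^(n-k)\<close> times an affine function of \<open>p\<close>, which gives a combination of
  \<open>B(\<alpha>+k, \<beta>+n-k)\<close> and \<open>B(\<alpha>+k+1, \<beta>+n-k)\<close>. The two combinations agree because the
  ratio of these Beta values is the posterior mean \<open>(\<alpha>+k)/(\<alpha>+\<beta>+n)\<close>.\<close>

definition beta_kernel :: "real \<Rightarrow> real \<Rightarrow> real \<Rightarrow> real" where
  "beta_kernel a b p = indicator {0..1} p * p powr (a - 1) * (1 - p) powr (b - 1)"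

lemma beta_kernel_eq_indicator_scaleR:
  "beta_kernel a b = (\<lambda>p. indicator {0..1} p *\<^sub>R (p powr (a - 1) * (1 - p) powr (b - 1)))"
  by (auto simp: beta_kernel_def fun_eq_iff)

lemma integrable_beta_kernel:
  assumes "a > 0" "b > 0"
  shows "integrable lborel (beta_kernel a b)"
  using integrable_Beta[OF assms]
  unfolding beta_kernel_eq_indicator_scaleR set_integrable_def .

lemma integral_beta_kernel:
  assumes "a > 0" "b > 0"
  shows "integral\<^sup>L lborel (beta_kernel a b) = Beta a b"
proof -
  have "integral\<^sup>L lborel (beta_kernel a b)
      = (LINT p : {0..1} | lborel. p powr (a - 1) * (1 - p) powr (b - 1))"
    unfolding beta_kernel_eq_indicator_scaleR set_lebesgue_integral_def ..
  also have "\<dots> = integral {0..1} (\<lambda>p. p powr (a - 1) * (1 - p) powr (b - 1))"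
    by (rule set_borel_integral_eq_integral(2)[OF integrable_Beta[OF assms]])
  also have "\<dots> = Beta a b"
    by (rule integral_unique[OF has_integral_Beta_real[OF assms]])
  finally show ?thesis .
qed

lemma mult_beta_kernel: "p * beta_kernel a b p = beta_kernel (a + 1) b p"
proof (cases "p = 0")
  case False
  then show ?thesis
    by (cases "p \<in> {0..1}") (auto simp: beta_kernel_def powr_add powr_diff)
qed (simp add: beta_kernel_def)

lemma powr_mult_power: "(p::real) \<ge> 0 \<Longrightarrow> p powr c * p ^ k = p powr (c + real k)"
  by (cases "p = 0") (auto simp: powr_add powr_realpow)

lemma integral_beta_measure:
  assumes "h \<in> borel_measurable borel"
  shows "(\<integral>p. h p \<partial>beta_measure a b) = (\<integral>p. beta_density a b p * h p \<partial>lborel)"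
proof -
  have "beta_fun a b \<ge> 0"
    unfolding beta_fun_def interval_lebesgue_integral_def set_lebesgue_integral_def
    by (auto intro!: Bochner_Integration.integral_nonneg simp: indicator_def)
  then have "beta_density a b p \<ge> 0" for p
    by (auto simp: beta_density_def indicator_def)
  with assms show ?thesis
    unfolding beta_measure_def beta_density_def by (subst integral_density) auto
qed

definition bool_vectors :: "nat \<Rightarrow> (nat \<Rightarrow> bool) set" where
  "bool_vectors n = PiE_dflt {..<n} False (\<lambda>_. UNIV)"

definition count_true :: "nat \<Rightarrow> (nat \<Rightarrow> bool) \<Rightarrow> nat" where
  "count_true n x = card ({..<n} \<inter> {i. x i})"

definition bern_likelihood :: "nat \<Rightarrow> (nat \<Rightarrow> bool) \<Rightarrow> real \<Rightarrow> real" where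
  "bern_likelihood n x p = p ^ count_true n x * (1 - p) ^ (n - count_true n x)"

lemma finite_bool_vectors: "finite (bool_vectors n)"
  by (auto simp: bool_vectors_def)

lemma count_true_le: "count_true n x \<le> n"
  unfolding count_true_def by (metis card_lessThan card_mono finite_lessThan inf_le1)

lemma sum_indicator_minus_eq_count_true:
  "(\<Sum>i<n. (if x i then 1 else 0) - (p::real)) = real (count_true n x) - real n * p"
  by (simp add: count_true_def sum_subtractf sum.If_cases)

lemma pmf_bern_prod:
  assumes "x \<in> bool_vectors n" "p \<in> {0..1}"
  shows "pmf (bern_prod n p) x = bern_likelihood n x p"
proof -
  have "pmf (bern_prod n p) x = (\<Prod>i<n. if x i then p else 1 - p)"
    unfolding bern_prod_def using assms
    by (subst pmf_Pi') (auto simp: bool_vectors_def PiE_dflt_def intro!: prod.cong)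
  also have "\<dots> = p ^ count_true n x * (1 - p) ^ card ({..<n} - {i. x i})"
    by (simp add: prod.If_cases count_true_def Diff_eq)
  also have "card ({..<n} - {i. x i}) = n - count_true n x"
    by (metis card_Diff_subset_Int card_lessThan count_true_def finite_Int finite_lessThan)
  finally show ?thesis
    by (simp add: bern_likelihood_def)
qed

text \<open>\<open>bernoulli_pmf\<close> clamps its parameter to \<open>[0,1]\<close>, so the expectation is a polynomial
  in \<open>p\<close> only on \<open>[0,1]\<close>; the clamped form holds everywhere and is visibly measurable.\<close>
lemma bernoulli_pmf_clamp: "bernoulli_pmf p = bernoulli_pmf (min 1 (max 0 p))"
  by (rule pmf_eqI) (simp add: bernoulli_pmf.rep_eq)

lemma expectation_bern_prod:
  "measure_pmf.expectation (bern_prod n p) h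
     = (\<Sum>x\<in>bool_vectors n. h x * bern_likelihood n x (min 1 (max 0 p)))"
proof -
  have bern_prod_clamp: "bern_prod n p = bern_prod n (min 1 (max 0 p))"
    unfolding bern_prod_def by (subst bernoulli_pmf_clamp) simp
  have "set_pmf (bern_prod n q) \<subseteq> bool_vectors n" for q
    using set_Pi_pmf_subset[of "{..<n}" False]
    by (auto simp: bern_prod_def bool_vectors_def PiE_dflt_def)
  then have "measure_pmf.expectation (bern_prod n p) h
      = (\<Sum>x\<in>bool_vectors n. h x * pmf (bern_prod n (min 1 (max 0 p))) x)"
    unfolding bern_prod_clamp by (intro integral_measure_pmf_real[OF finite_bool_vectors]) auto
  also have "\<dots> = (\<Sum>x\<in>bool_vectors n. h x * bern_likelihood n x (min 1 (max 0 p)))"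
    by (intro sum.cong refl) (simp add: pmf_bern_prod)
  finally show ?thesis .
qed

text \<open>The likelihood times the prior density is the unnormalised posterior density;
  outside \<open>[0,1]\<close> both sides vanish.\<close>
lemma beta_density_mult_bern_likelihood:
  "beta_density a b p * bern_likelihood n x (min 1 (max 0 p))
     = beta_kernel (a + real (count_true n x)) (b + real (n - count_true n x)) p / beta_fun a b"
proof (cases "p \<in> {0..1}")
  case True
  define k where "k = count_true n x"
  have "p powr (a - 1) * p ^ k = p powr (a + real k - 1)"
    using powr_mult_power[of p "a - 1" k] True by (simp add: algebra_simps)
  moreover have "(1 - p) powr (b - 1) * (1 - p) ^ (n - k) = (1 - p) powr (b + real (n - k) - 1)"
    using powr_mult_power[of "1 - p" "b - 1" "n - k"] True by (simp add: algebra_simps)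
  ultimately show ?thesis
    using True
    by (simp add: beta_density_def beta_kernel_def bern_likelihood_def k_def[symmetric] algebra_simps)
qed (simp add: beta_density_def beta_kernel_def)

lemma integral_beta_kernel_affine:
  assumes "a > 0" "b > 0"
  shows "integrable lborel (\<lambda>p. u * beta_kernel a b p + v * beta_kernel (a + 1) b p)"
    and "(\<integral>p. u * beta_kernel a b p + v * beta_kernel (a + 1) b p \<partial>lborel)
       = u * Beta a b + v * Beta (a + 1) b"
  using assms integrable_beta_kernel[of a b] integrable_beta_kernel[of "a + 1" b]
  by (simp_all add: integral_beta_kernel)

lemma integral_beta_measure_expectation_bern_prod_affine:
  assumes "a > 0" "b > 0"
  shows "(\<integral>P. measure_pmf.expectation (bern_prod n P) (\<lambda>x. u x + v x * P) \<partial>beta_measure a b)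
       = (\<Sum>x\<in>bool_vectors n.
            u x * Beta (a + count_true n x) (b + real (n - count_true n x))
          + v x * Beta (a + count_true n x + 1) (b + real (n - count_true n x))) / beta_fun a b"
proof -
  define A where "A x = a + real (count_true n x)" for x
  define B where "B x = b + real (n - count_true n x)" for x
  have "(\<integral>P. measure_pmf.expectation (bern_prod n P) (\<lambda>x. u x + v x * P) \<partial>beta_measure a b)
      = (\<integral>P. beta_density a b P *
           (\<Sum>x\<in>bool_vectors n. (u x + v x * P) * bern_likelihood n x (min 1 (max 0 P))) \<partial>lborel)"
    unfolding expectation_bern_prod
    by (rule integral_beta_measure) (simp add: bern_likelihood_def)
  also have "\<dots> = (\<integral>P. (\<Sum>x\<in>bool_vectors n.
      u x * beta_kernel (A x) (B x) P + v x * beta_kernel (A x + 1) (B x) P) / beta_fun a b \<partial>lborel)"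
  proof (intro Bochner_Integration.integral_cong refl)
    fix P
    have "beta_density a b P * ((u x + v x * P) * bern_likelihood n x (min 1 (max 0 P)))
        = (u x * beta_kernel (A x) (B x) P + v x * beta_kernel (A x + 1) (B x) P) / beta_fun a b" for x
    proof -
      have "beta_density a b P * ((u x + v x * P) * bern_likelihood n x (min 1 (max 0 P)))
          = (u x + v x * P) * (beta_kernel (A x) (B x) P / beta_fun a b)"
        unfolding A_def B_def beta_density_mult_bern_likelihood[symmetric] by (simp only: ac_simps)
      then show ?thesis
        unfolding mult_beta_kernel[symmetric] by (simp add: add_divide_distrib algebra_simps)
    qed
    then show "beta_density a b P *
        (\<Sum>x\<in>bool_vectors n. (u x + v x * P) * bern_likelihood n x (min 1 (max 0 P)))
      = (\<Sum>x\<in>bool_vectors n.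
          u x * beta_kernel (A x) (B x) P + v x * beta_kernel (A x + 1) (B x) P) / beta_fun a b"
      by (simp add: sum_distrib_left sum_divide_distrib)
  qed
  also have "\<dots> = (\<Sum>x\<in>bool_vectors n. u x * Beta (A x) (B x) + v x * Beta (A x + 1) (B x)) / beta_fun a b"
    using assms integral_beta_kernel_affine[of "A x" "B x" for x]
    by (simp add: A_def B_def add_pos_nonneg)
  finally show ?thesis by (simp add: A_def B_def)
qed

text \<open>After division by \<open>B0\<close> both sides are affine in \<open>B1 / B0\<close>, and they agree at its
  value \<open>(a + k) / (a + b + n)\<close>.\<close>
lemma Beta_posterior_mean_identity:
  fixes a b B0 B1 :: real and k n :: nat
  assumes "a > 0" "b > 0" "k \<le> n"
  defines "B0 \<equiv> Beta (a + k) (b + real (n - k))" and "B1 \<equiv> Beta (a + k + 1) (b + real (n - k))"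
  shows "real k * B0 - real n * B1 = (a + b) * (B1 - a / (a + b) * B0)"
proof -
  have "a + k \<notin> \<int>\<^sub>\<le>\<^sub>0"
    using assms(1) by (auto elim!: nonpos_Ints_cases)
  from Beta_plus1_left[OF this, of "b + real (n - k)"]
  have "(a + b + n) * B1 = (a + k) * B0"
    using assms(3) by (simp add: B0_def B1_def of_nat_diff algebra_simps)
  moreover have "(a + b) * (B1 - a / (a + b) * B0) = (a + b) * B1 - a * B0"
    using assms(1,2) by (simp add: right_diff_distrib)
  ultimately show ?thesis
    by (simp only: algebra_simps)
qed

theorem lemma3p4:
  fixes n :: nat and f :: "(nat \<Rightarrow> bool) \<Rightarrow> real" and \<alpha> \<beta> :: real
    and g :: "real \<Rightarrow> real"
  assumes "\<alpha> > 0" and "\<beta> > 0"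
    and "\<And>p. g p = measure_pmf.expectation (bern_prod n p) f"
  shows "(\<integral>P. measure_pmf.expectation (bern_prod n P)
              (\<lambda>X. f X * (\<Sum>i<n. (if X i then 1 else 0) - P)) \<partial>beta_measure \<alpha> \<beta>)
       = (\<alpha> + \<beta>) * (\<integral>P. g P * (P - \<alpha> / (\<alpha> + \<beta>)) \<partial>beta_measure \<alpha> \<beta>)"
proof -
  define k where "k x = count_true n x" for x
  define B0 where "B0 x = Beta (\<alpha> + k x) (\<beta> + real (n - k x))" for x
  define B1 where "B1 x = Beta (\<alpha> + k x + 1) (\<beta> + real (n - k x))" for x
  have "(\<integral>P. measure_pmf.expectation (bern_prod n P)
              (\<lambda>X. f X * (\<Sum>i<n. (if X i then 1 else 0) - P)) \<partial>beta_measure \<alpha> \<beta>)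
      = (\<integral>P. measure_pmf.expectation (bern_prod n P)
              (\<lambda>x. f x * k x + (- n * f x) * P) \<partial>beta_measure \<alpha> \<beta>)"
    by (simp add: sum_indicator_minus_eq_count_true k_def algebra_simps)
  also have "\<dots> = (\<Sum>x\<in>bool_vectors n. f x * (k x * B0 x - n * B1 x)) / beta_fun \<alpha> \<beta>"
    using assms(1,2) by (subst integral_beta_measure_expectation_bern_prod_affine)
      (simp_all add: k_def B0_def B1_def algebra_simps)
  also have "\<dots> = (\<alpha> + \<beta>) * ((\<Sum>x\<in>bool_vectors n. f x * (B1 x - \<alpha> / (\<alpha> + \<beta>) * B0 x)) / beta_fun \<alpha> \<beta>)"
  proof -
    have "f x * (k x * B0 x - n * B1 x) = (\<alpha> + \<beta>) * (f x * (B1 x - \<alpha> / (\<alpha> + \<beta>) * B0 x))" for x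
      using Beta_posterior_mean_identity[OF assms(1,2) count_true_le, of n x]
      by (simp add: B0_def B1_def k_def)
    then show ?thesis
      by (simp only: sum_distrib_left[symmetric] times_divide_eq_right)
  qed
  also have "(\<Sum>x\<in>bool_vectors n. f x * (B1 x - \<alpha> / (\<alpha> + \<beta>) * B0 x)) / beta_fun \<alpha> \<beta>
      = (\<integral>P. measure_pmf.expectation (bern_prod n P)
              (\<lambda>x. (- \<alpha> / (\<alpha> + \<beta>) * f x) + f x * P) \<partial>beta_measure \<alpha> \<beta>)"
    using assms(1,2) by (subst integral_beta_measure_expectation_bern_prod_affine)
      (simp_all add: k_def B0_def B1_def algebra_simps)
  also have "\<dots> = (\<integral>P. g P * (P - \<alpha> / (\<alpha> + \<beta>)) \<partial>beta_measure \<alpha> \<beta>)"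
  proof -
    have "(\<lambda>x. (- \<alpha> / (\<alpha> + \<beta>) * f x) + f x * P) = (\<lambda>x. f x * (P - \<alpha> / (\<alpha> + \<beta>)))" for P
      by (auto simp: algebra_simps)
    then show ?thesis
      by (simp add: assms(3))
  qed
  finally show ?thesis .
qed

end
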